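(* Let $\Lambda,\mathcal R,V$ satisfy the assumptions in the context and let $W(F)=\frac{1}{\det A_\Lambda}V((F\cdot\rho)_{\rho\in\mathcal R})$ for $F\in\mathbb{R}^2$. Then $\nabla^2W(0)=c_{\rm lin}\mathrm{Id}$ for some $c_{\rm lin}>0$, and therefore $-\mathrm{div}(\nabla^2W(0)[\nabla u])=-c_{\rm lin}\Delta u$ for every twice differentiable $u$.
   Context: $\Lambda=A_\Lambda\mathbb{Z}^2$ is the square lattice ($A_\Lambda=\mathrm{Id}$) or the triangular lattice ($A_\Lambda=\begin{pmatrix}1&\frac12\\0&\frac{\sqrt3}{2}\end{pmatrix}$); $Q_\Lambda$ is the rotation through $\pi/2$ (square) or $2\pi/3$ (triangular). $\mathcal R\subset\Lambda\setminus\{0\}$ is finite with $\mathrm{span}_\mathbb{Z}\mathcal R=\Lambda$ and $Q_\Lambda\mathcal R=\mathcal R$. $V\in C^6(\mathbb{R}^{\mathcal R},\mathbb{R})$ satisfies $V(A)=V((A_{Q_\Lambda\rho})_{\rho\in\mathcal R})$, is periodic with some minimal period $p>0$ in each component, and is lattice stable: there is $c_0>0$ with $\sum_{x\in\Lambda}\sum_{\rho,\sigma\in\mathcal R}\nabla^2V(0)_{\rho\sigma}D_\rho u(x)D_\sigma u(x)\ge c_0\sum_x|(D_\rho u(x))_{\rho\in\mathcal R}|^2$ for all $u:\Lambda\to\mathbb{R}$ with $(D_\rho u)_\rho\in\ell^2$, where $D_\rho u(x)=u(x+\rho)-u(x)$. *)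

theory Defs
  imports "HOL-Analysis.Analysis"
begin

definition pderiv_at :: "(real^'n \<Rightarrow> real) \<Rightarrow> 'n \<Rightarrow> real^'n \<Rightarrow> real" where
  "pderiv_at f i x = frechet_derivative f (at x) (axis i 1)"

definition hess_at :: "(real^'n \<Rightarrow> real) \<Rightarrow> real^'n \<Rightarrow> 'n \<Rightarrow> 'n \<Rightarrow> real" where
  "hess_at f x i j = pderiv_at (pderiv_at f i) j x"

fun Ck :: "nat \<Rightarrow> (real^'n \<Rightarrow> real) \<Rightarrow> bool" where
  "Ck 0 f = continuous_on UNIV f"
| "Ck (Suc k) f = (continuous_on UNIV f \<and> (\<forall>x. f differentiable (at x)) \<and> (\<forall>i. Ck k (pderiv_at f i)))"

definition twice_differentiable :: "(real^'n \<Rightarrow> real) \<Rightarrow> bool" where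
  "twice_differentiable u = ((\<forall>x. u differentiable (at x)) \<and>
     (\<forall>i x. pderiv_at u i differentiable (at x)))"

text \<open>Matrices are given by their rows.\<close>
definition rot2 :: "real \<Rightarrow> real^2^2" where
  "rot2 \<theta> = vector [vector [cos \<theta>, - sin \<theta>], vector [sin \<theta>, cos \<theta>]]"

definition A_square :: "real^2^2" where
  "A_square = mat 1"

definition A_tri :: "real^2^2" where
  "A_tri = vector [vector [1, 1/2], vector [0, sqrt 3 / 2]]"

definition lattice :: "real^2^2 \<Rightarrow> (real^2) set" where
  "lattice A = range (\<lambda>z::int^2. A *v (\<chi> i. real_of_int (z $ i)))"

definition int_span :: "(real^2) set \<Rightarrow> (real^2) set" where
  "int_span R = {y. \<exists>c::real^2 \<Rightarrow> int. y = (\<Sum>r\<in>R. of_int (c r) *\<^sub>R r)}"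

definition fdiff :: "real^2 \<Rightarrow> (real^2 \<Rightarrow> real) \<Rightarrow> real^2 \<Rightarrow> real" where
  "fdiff \<rho> u x = u (x + \<rho>) - u x"

end

(*
  The Hessian of W at 0 is, up to the factor 1 / det A, the matrix of second moments
  B k l = sum over p, q of (d_p d_q V)(0) * rho_p$k * rho_q$l.  Invariance of V under the
  rotation Q permutes the bonds and leaves the Hessian of V at 0 invariant, so B is a
  symmetric form invariant under a rotation by pi/2 or 2 pi/3, hence B = b Id.
  To see b > 0, test lattice stability with a large truncated pyramid written in lattice
  coordinates: on almost all of its support its discrete gradient along the bonds is
  constant, so stability forces B(l, l) >= c0 * sum of l(rho_p)^2 > 0 for the first dual
  coordinate l.
*)

theory Submission
  imports Defs "HOL-Real_Asymp.Real_Asymp"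
begin

section \<open>Partial derivatives and Hessians\<close>

lemma frechet_derivative_eq_sum_pderiv_at:
  fixes f :: "real^'n \<Rightarrow> real"
  assumes "f differentiable (at x)"
  shows "frechet_derivative f (at x) v = (\<Sum>p\<in>UNIV. v$p * pderiv_at f p x)"
proof -
  have "linear (frechet_derivative f (at x))"
    using assms frechet_derivative_works has_derivative_linear by blast
  then have "frechet_derivative f (at x) (\<Sum>p\<in>UNIV. v$p *\<^sub>R axis p 1) =
      (\<Sum>p\<in>UNIV. v$p * frechet_derivative f (at x) (axis p 1))"
    by (simp add: linear_sum linear_scale)
  then show ?thesis
    using basis_expansion[of v] by (simp add: pderiv_at_def scalar_mult_eq_scaleR)
qed

lemma differentiable_comp_matrix:
  fixes f :: "real^'n \<Rightarrow> real" and M :: "real^'m^'n"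
  assumes "f differentiable (at (M *v x))"
  shows "(\<lambda>y. f (M *v y)) differentiable (at x)"
proof -
  have "(*v) M differentiable (at x)"
    by (simp add: bounded_linear_imp_differentiable)
  from differentiable_chain_at[OF this assms] show ?thesis
    by (simp add: comp_def)
qed

lemma pderiv_at_comp_matrix:
  fixes f :: "real^'n \<Rightarrow> real" and M :: "real^'m^'n"
  assumes "f differentiable (at (M *v x))"
  shows "pderiv_at (\<lambda>y. f (M *v y)) k x = (\<Sum>p\<in>UNIV. (M *v axis k 1)$p * pderiv_at f p (M *v x))"
proof -
  have "((f \<circ> (*v) M) has_derivative (frechet_derivative f (at (M *v x)) \<circ> (*v) M)) (at x)"
    using assms by (intro diff_chain_at bounded_linear_imp_has_derivative)
      (simp_all flip: frechet_derivative_works)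
  then have "pderiv_at (\<lambda>y. f (M *v y)) k x = frechet_derivative f (at (M *v x)) (M *v axis k 1)"
    unfolding pderiv_at_def by (simp add: frechet_derivative_at[symmetric] comp_def)
  then show ?thesis
    using frechet_derivative_eq_sum_pderiv_at[OF assms] by simp
qed

lemma pderiv_at_sum_scaled:
  fixes g :: "'a \<Rightarrow> real^'n \<Rightarrow> real"
  assumes "finite S" "\<And>p. p \<in> S \<Longrightarrow> g p differentiable (at x)"
  shows "pderiv_at (\<lambda>y. \<Sum>p\<in>S. c p * g p y) l x = (\<Sum>p\<in>S. c p * pderiv_at (g p) l x)"
proof -
  have "((\<lambda>y. \<Sum>p\<in>S. c p * g p y) has_derivative
      (\<lambda>v. \<Sum>p\<in>S. c p * frechet_derivative (g p) (at x) v)) (at x)"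
    using assms by (intro has_derivative_sum has_derivative_mult_right)
      (auto simp: frechet_derivative_works)
  then show ?thesis
    unfolding pderiv_at_def by (simp add: frechet_derivative_at[symmetric])
qed

lemma pderiv_at_divide_const:
  fixes g :: "real^'n \<Rightarrow> real"
  assumes "g differentiable (at x)"
  shows "pderiv_at (\<lambda>y. g y / c) l x = pderiv_at g l x / c"
  using pderiv_at_sum_scaled[of "{()}" "\<lambda>_. g" x "\<lambda>_. 1 / c" l] assms by simp

lemma hess_at_comp_matrix:
  fixes f :: "real^'n \<Rightarrow> real" and M :: "real^'m^'n"
  assumes "\<And>y. f differentiable (at y)" "\<And>p y. pderiv_at f p differentiable (at y)"
  shows "hess_at (\<lambda>y. f (M *v y)) x k l =
     (\<Sum>p\<in>UNIV. \<Sum>q\<in>UNIV. (M *v axis k 1)$p * (M *v axis l 1)$q * hess_at f (M *v x) p q)"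
proof -
  have "pderiv_at (\<lambda>y. f (M *v y)) k = (\<lambda>y. \<Sum>p\<in>UNIV. (M *v axis k 1)$p * pderiv_at f p (M *v y))"
    using pderiv_at_comp_matrix[OF assms(1)] by blast
  then have "hess_at (\<lambda>y. f (M *v y)) x k l =
      (\<Sum>p\<in>UNIV. (M *v axis k 1)$p * pderiv_at (\<lambda>y. pderiv_at f p (M *v y)) l x)"
    unfolding hess_at_def using assms(2)
    by (simp add: pderiv_at_sum_scaled differentiable_comp_matrix)
  also have "\<dots> = (\<Sum>p\<in>UNIV. (M *v axis k 1)$p *
      (\<Sum>q\<in>UNIV. (M *v axis l 1)$q * hess_at f (M *v x) p q))"
    using assms(2) by (simp add: pderiv_at_comp_matrix hess_at_def)
  finally show ?thesis
    by (simp add: sum_distrib_left mult.assoc)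
qed

lemma has_real_derivative_along_line:
  fixes f :: "real^'n \<Rightarrow> real"
  assumes "f differentiable (at (x + t *\<^sub>R v))"
  shows "((\<lambda>s. f (x + s *\<^sub>R v)) has_real_derivative frechet_derivative f (at (x + t *\<^sub>R v)) v) (at t)"
proof -
  let ?f' = "frechet_derivative f (at (x + t *\<^sub>R v))"
  have "((\<lambda>s. f (x + s *\<^sub>R v)) has_derivative (\<lambda>s. ?f' (s *\<^sub>R v))) (at t)"
  proof -
    have "((\<lambda>s. x + s *\<^sub>R v) has_derivative (\<lambda>s. s *\<^sub>R v)) (at t)"
      by (auto intro!: derivative_eq_intros)
    from diff_chain_at[OF this] assms show ?thesis
      by (simp add: comp_def frechet_derivative_works)
  qed
  moreover have "linear ?f'"
    using assms frechet_derivative_works has_derivative_linear by blast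
  ultimately show ?thesis
    by (simp add: has_field_derivative_def linear_scale mult.commute[of _ "?f' v"])
qed

lemma second_difference_mean_value:
  fixes f :: "real^'n \<Rightarrow> real"
  assumes "\<And>y. f differentiable (at y)" "\<And>y. pderiv_at f i differentiable (at y)" "0 < h"
  obtains \<xi> \<eta> where "0 < \<xi>" "\<xi> < h" "0 < \<eta>" "\<eta> < h"
    "f (x + h *\<^sub>R axis i 1 + h *\<^sub>R axis j 1) - f (x + h *\<^sub>R axis i 1) - f (x + h *\<^sub>R axis j 1) + f x
     = h * (h * hess_at f (x + \<xi> *\<^sub>R axis i 1 + \<eta> *\<^sub>R axis j 1) i j)"
proof -
  define e where "e = (axis i 1 :: real^'n)"
  define e' where "e' = (axis j 1 :: real^'n)"
  define g where "g = (\<lambda>t. f ((x + h *\<^sub>R e') + t *\<^sub>R e) - f (x + t *\<^sub>R e))"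
  have "(g has_real_derivative
      (pderiv_at f i ((x + h *\<^sub>R e') + t *\<^sub>R e) - pderiv_at f i (x + t *\<^sub>R e))) (at t)" for t
    unfolding g_def pderiv_at_def e_def
    by (intro DERIV_diff has_real_derivative_along_line assms(1))
  from MVT2[OF \<open>0 < h\<close> this] obtain \<xi> where \<xi>: "0 < \<xi>" "\<xi> < h"
    and g_diff: "g h - g 0 = h * (pderiv_at f i ((x + h *\<^sub>R e') + \<xi> *\<^sub>R e) - pderiv_at f i (x + \<xi> *\<^sub>R e))"
    by auto
  define \<psi> where "\<psi> = (\<lambda>s. pderiv_at f i ((x + \<xi> *\<^sub>R e) + s *\<^sub>R e'))"
  have "(\<psi> has_real_derivative hess_at f ((x + \<xi> *\<^sub>R e) + s *\<^sub>R e') i j) (at s)" for s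
    unfolding \<psi>_def hess_at_def pderiv_at_def[of "pderiv_at f i"] e'_def
    by (intro has_real_derivative_along_line assms(2))
  from MVT2[OF \<open>0 < h\<close> this] obtain \<eta> where \<eta>: "0 < \<eta>" "\<eta> < h"
    and "\<psi> h - \<psi> 0 = h * hess_at f ((x + \<xi> *\<^sub>R e) + \<eta> *\<^sub>R e') i j"
    by auto
  then have "g h - g 0 = h * (h * hess_at f (x + \<xi> *\<^sub>R e + \<eta> *\<^sub>R e') i j)"
    using g_diff unfolding \<psi>_def by (simp add: add_ac)
  moreover have "g h - g 0 = f (x + h *\<^sub>R e + h *\<^sub>R e') - f (x + h *\<^sub>R e) - f (x + h *\<^sub>R e') + f x"
    unfolding g_def by (simp add: add_ac)
  ultimately show ?thesis
    using that \<xi> \<eta> unfolding e_def e'_def by metis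
qed

lemma dist_add_scaled_axes_less:
  fixes x :: "real^'n"
  assumes "0 < \<xi>" "0 < \<eta>" "\<xi> + \<eta> < d"
  shows "dist (x + \<xi> *\<^sub>R axis i 1 + \<eta> *\<^sub>R axis j 1) x < d"
proof -
  have "dist (x + \<xi> *\<^sub>R axis i 1 + \<eta> *\<^sub>R axis j 1) x =
      norm (\<xi> *\<^sub>R axis i 1 + \<eta> *\<^sub>R (axis j 1 :: real^'n))"
    by (simp add: dist_norm)
  also have "\<dots> \<le> norm (\<xi> *\<^sub>R (axis i 1 :: real^'n)) + norm (\<eta> *\<^sub>R (axis j 1 :: real^'n))"
    by (rule norm_triangle_ineq)
  finally show ?thesis
    using assms by simp
qed

lemma hess_at_symmetric:
  fixes f :: "real^'n \<Rightarrow> real"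
  assumes "\<And>y. f differentiable (at y)"
    and "\<And>y. pderiv_at f i differentiable (at y)" "\<And>y. pderiv_at f j differentiable (at y)"
    and "continuous (at x) (\<lambda>y. hess_at f y i j)" "continuous (at x) (\<lambda>y. hess_at f y j i)"
  shows "hess_at f x i j = hess_at f x j i"
proof (rule ccontr)
  assume "hess_at f x i j \<noteq> hess_at f x j i"
  then have D: "\<bar>hess_at f x i j - hess_at f x j i\<bar> / 2 > 0" (is "?D > 0")
    by simp
  obtain d1 where d1: "d1 > 0" "\<And>y. dist y x < d1 \<Longrightarrow> dist (hess_at f y i j) (hess_at f x i j) < ?D"
    using assms(4) D unfolding continuous_at_eps_delta by blast
  obtain d2 where d2: "d2 > 0" "\<And>y. dist y x < d2 \<Longrightarrow> dist (hess_at f y j i) (hess_at f x j i) < ?D"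
    using assms(5) D unfolding continuous_at_eps_delta by blast
  define h where "h = min d1 d2 / 2"
  have "h > 0"
    using d1 d2 by (simp add: h_def)
  obtain \<xi> \<eta> where A: "0 < \<xi>" "\<xi> < h" "0 < \<eta>" "\<eta> < h"
    "f (x + h *\<^sub>R axis i 1 + h *\<^sub>R axis j 1) - f (x + h *\<^sub>R axis i 1) - f (x + h *\<^sub>R axis j 1) + f x
     = h * (h * hess_at f (x + \<xi> *\<^sub>R axis i 1 + \<eta> *\<^sub>R axis j 1) i j)"
    using second_difference_mean_value[OF assms(1,2) \<open>h > 0\<close>] by blast
  obtain \<xi>' \<eta>' where B: "0 < \<xi>'" "\<xi>' < h" "0 < \<eta>'" "\<eta>' < h"
    "f (x + h *\<^sub>R axis j 1 + h *\<^sub>R axis i 1) - f (x + h *\<^sub>R axis j 1) - f (x + h *\<^sub>R axis i 1) + f x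
     = h * (h * hess_at f (x + \<xi>' *\<^sub>R axis j 1 + \<eta>' *\<^sub>R axis i 1) j i)"
    using second_difference_mean_value[OF assms(1,3) \<open>h > 0\<close>] by blast
  have "h * (h * hess_at f (x + \<xi> *\<^sub>R axis i 1 + \<eta> *\<^sub>R axis j 1) i j) =
      h * (h * hess_at f (x + \<xi>' *\<^sub>R axis j 1 + \<eta>' *\<^sub>R axis i 1) j i)"
    using A(5) B(5) by (simp add: algebra_simps)
  then have "hess_at f (x + \<xi> *\<^sub>R axis i 1 + \<eta> *\<^sub>R axis j 1) i j =
      hess_at f (x + \<xi>' *\<^sub>R axis j 1 + \<eta>' *\<^sub>R axis i 1) j i"
    using \<open>h > 0\<close> by simp
  moreover have "dist (hess_at f (x + \<xi> *\<^sub>R axis i 1 + \<eta> *\<^sub>R axis j 1) i j) (hess_at f x i j) < ?D"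
    using A d1 by (intro d1(2) dist_add_scaled_axes_less) (auto simp: h_def)
  moreover have "dist (hess_at f (x + \<xi>' *\<^sub>R axis j 1 + \<eta>' *\<^sub>R axis i 1) j i) (hess_at f x j i) < ?D"
    using B d2 by (intro d2(2) dist_add_scaled_axes_less) (auto simp: h_def)
  ultimately show False
    unfolding dist_real_def by argo
qed

lemma Ck_Suc_Suc_hess_at_symmetric:
  assumes "Ck (Suc (Suc k)) f"
  shows "hess_at f x i j = hess_at f x j i"
proof -
  have "continuous_on UNIV (pderiv_at (pderiv_at f p) q)" for p q
    using assms by (cases k) auto
  then have "continuous (at x) (\<lambda>y. hess_at f y p q)" for p q
    by (simp add: hess_at_def continuous_on_eq_continuous_at flip: eta_contract_eq)
  then show ?thesis
    using assms by (intro hess_at_symmetric) auto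
qed

lemma Ck_Suc_Suc_differentiable:
  assumes "Ck (Suc (Suc k)) f"
  shows "f differentiable (at y)" "pderiv_at f p differentiable (at y)"
  using assms by (cases k; simp)+

lemma divergence_scalar_matrix_gradient:
  fixes u :: "real^'n \<Rightarrow> real"
  assumes "twice_differentiable u" "\<And>k l. M k l = (if k = l then c else 0)"
  shows "- (\<Sum>k\<in>UNIV. pderiv_at (\<lambda>y. \<Sum>l\<in>UNIV. M k l * pderiv_at u l y) k x) =
    - c * (\<Sum>k\<in>UNIV. hess_at u x k k)"
proof -
  have "pderiv_at (\<lambda>y. \<Sum>l\<in>UNIV. M k l * pderiv_at u l y) k x =
      (\<Sum>l\<in>UNIV. M k l * pderiv_at (pderiv_at u l) k x)" for k
    using assms(1) unfolding twice_differentiable_def by (intro pderiv_at_sum_scaled) auto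
  moreover have "(\<Sum>l\<in>UNIV. (if k = l then c else 0) * g l) = c * g k" for k and g :: "'n \<Rightarrow> real"
  proof -
    have "(if k = l then c else 0) * g l = (if k = l then c * g l else 0)" for l
      by simp
    then show ?thesis
      by simp
  qed
  ultimately show ?thesis
    by (simp add: assms(2) hess_at_def sum_distrib_left sum_negf)
qed

section \<open>Isotropy of the second moments\<close>

lemma hess_at_permute_vars:
  fixes V :: "real^'r \<Rightarrow> real"
  assumes V_perm: "\<And>a. V a = V (\<chi> i. a $ \<pi> i)" and "inj \<pi>"
    and "\<And>y. V differentiable (at y)" "\<And>p y. pderiv_at V p differentiable (at y)"
  shows "hess_at V 0 (\<pi> i) (\<pi> j) = hess_at V 0 i j"
proof -
  define P :: "real^'r^'r" where "P = (\<chi> i. axis (\<pi> i) 1)"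
  have P_axis: "(P *v axis k 1)$p = (if \<pi> p = k then 1 else 0)" for k p
    by (simp add: matrix_vector_mul_component P_def inner_axis_axis)
  have "(\<chi> i. a $ \<pi> i) = P *v a" for a
    by (simp add: vec_eq_iff matrix_vector_mul_component P_def inner_axis')
  then have "V = (\<lambda>a. V (P *v a))"
    using V_perm by auto
  then have "hess_at V 0 (\<pi> i) (\<pi> j) = hess_at (\<lambda>a. V (P *v a)) 0 (\<pi> i) (\<pi> j)"
    by (rule arg_cong[where f = "\<lambda>f. hess_at f 0 (\<pi> i) (\<pi> j)"])
  also have "\<dots> = (\<Sum>p\<in>UNIV. \<Sum>q\<in>UNIV.
      (P *v axis (\<pi> i) 1)$p * (P *v axis (\<pi> j) 1)$q * hess_at V (P *v 0) p q)"
    using assms(3,4) by (rule hess_at_comp_matrix)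
  also have "\<dots> = hess_at V 0 i j"
  proof -
    have "(\<Sum>q\<in>UNIV. (P *v axis (\<pi> i) 1)$p * (P *v axis (\<pi> j) 1)$q * hess_at V (P *v 0) p q) =
        (if p = i then hess_at V 0 i j else 0)" for p
      using \<open>inj \<pi>\<close> by (cases "p = i") (simp_all add: P_axis inj_eq mult_if_delta)
    then show ?thesis
      by simp
  qed
  finally show ?thesis .
qed

lemma rot2_components:
  "(rot2 t *v r)$1 = cos t * r$1 - sin t * r$2" "(rot2 t *v r)$2 = sin t * r$1 + cos t * r$2"
  by (simp_all add: rot2_def matrix_vector_mult_def sum_2)

lemma rot2_neg_cancel: "rot2 (- t) *v (rot2 t *v x) = x"
proof -
  have "cos t * (cos t * a - sin t * b) + sin t * (sin t * a + cos t * b) = (sin t ^ 2 + cos t ^ 2) * a"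
    "cos t * (sin t * a + cos t * b) - sin t * (cos t * a - sin t * b) = (sin t ^ 2 + cos t ^ 2) * b" for a b
    by algebra+
  then show ?thesis
    by (simp add: vec_eq_iff forall_2 rot2_components)
qed

lemma inj_rot2: "inj (\<lambda>x. rot2 t *v x)"
  by (metis injI rot2_neg_cancel)

lemma rotation_permutation:
  fixes \<rho> :: "'r \<Rightarrow> real^2"
  assumes "inj \<rho>" "(\<lambda>r. rot2 t *v r) ` range \<rho> = range \<rho>"
  shows "\<rho> (inv \<rho> (rot2 t *v \<rho> i)) = rot2 t *v \<rho> i" "inj (\<lambda>i. inv \<rho> (rot2 t *v \<rho> i))"
proof -
  have "rot2 t *v \<rho> i \<in> range \<rho>" for i
    using assms(2) by blast
  then show \<rho>_inv: "\<rho> (inv \<rho> (rot2 t *v \<rho> i)) = rot2 t *v \<rho> i" for i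
    by (rule f_inv_into_f)
  show "inj (\<lambda>i. inv \<rho> (rot2 t *v \<rho> i))"
  proof (rule injI)
    fix i j
    assume "inv \<rho> (rot2 t *v \<rho> i) = inv \<rho> (rot2 t *v \<rho> j)"
    then have "rot2 t *v \<rho> i = rot2 t *v \<rho> j"
      by (metis \<rho>_inv)
    then show "i = j"
      using inj_rot2[THEN injD] \<open>inj \<rho>\<close>[THEN injD] by blast
  qed
qed

definition second_moment ::
    "('r::finite \<Rightarrow> 'r \<Rightarrow> real) \<Rightarrow> ('r \<Rightarrow> real^2) \<Rightarrow>
      (real^2 \<Rightarrow> real) \<Rightarrow> (real^2 \<Rightarrow> real) \<Rightarrow> real" where
  "second_moment h \<rho> f g = (\<Sum>p\<in>UNIV. \<Sum>q\<in>UNIV. h p q * f (\<rho> p) * g (\<rho> q))"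

lemma second_moment_permute:
  assumes "inj \<pi>" "\<And>i j. h (\<pi> i) (\<pi> j) = h i j"
  shows "second_moment h (\<lambda>p. \<rho> (\<pi> p)) f g = second_moment h \<rho> f g"
proof -
  have bij: "bij \<pi>"
    using \<open>inj \<pi>\<close> by (simp add: bij_def finite_UNIV_inj_surj)
  have "second_moment h (\<lambda>p. \<rho> (\<pi> p)) f g =
      (\<Sum>p\<in>UNIV. \<Sum>q\<in>UNIV. h (\<pi> p) (\<pi> q) * f (\<rho> (\<pi> p)) * g (\<rho> (\<pi> q)))"
    by (simp add: second_moment_def assms(2))
  also have "\<dots> = second_moment h \<rho> f g"
    unfolding second_moment_def
    using sum.reindex_bij_betw[OF bij, of "\<lambda>p. \<Sum>q\<in>UNIV. h p q * f (\<rho> p) * g (\<rho> q)"]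
      sum.reindex_bij_betw[OF bij, of "\<lambda>q. h _ q * f (\<rho> _) * g (\<rho> q)"]
    by simp
  finally show ?thesis .
qed

lemma second_moment_linear:
  "second_moment h \<rho> (\<lambda>r. \<alpha> * r$1 + \<beta> * r$2) (\<lambda>r. \<gamma> * r$1 + \<delta> * r$2) =
     \<alpha> * \<gamma> * second_moment h \<rho> (\<lambda>r. r$1) (\<lambda>r. r$1)
   + \<alpha> * \<delta> * second_moment h \<rho> (\<lambda>r. r$1) (\<lambda>r. r$2)
   + \<beta> * \<gamma> * second_moment h \<rho> (\<lambda>r. r$2) (\<lambda>r. r$1)
   + \<beta> * \<delta> * second_moment h \<rho> (\<lambda>r. r$2) (\<lambda>r. r$2)"
  by (simp add: second_moment_def algebra_simps sum.distrib sum_distrib_left)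

lemma second_moment_swap:
  assumes "\<And>p q. h p q = h q p"
  shows "second_moment h \<rho> g f = second_moment h \<rho> f g"
  unfolding second_moment_def
  by (subst sum.swap) (simp add: assms mult_ac)

lemma rotation_invariant_form_isotropic:
  fixes b11 b12 b22 c s :: real
  assumes "s\<^sup>2 + c\<^sup>2 = 1" "s \<noteq> 0"
    and "c * c * b11 - 2 * c * s * b12 + s * s * b22 = b11"
    and "c * s * b11 + (c * c - s * s) * b12 - c * s * b22 = b12"
  shows "b22 = b11 \<and> b12 = 0"
proof -
  have "s * (s * (b22 - b11) - 2 * c * b12) = 0"
    using assms(1,3) by algebra
  then have D: "s * (b22 - b11) = 2 * c * b12"
    using \<open>s \<noteq> 0\<close> by simp
  have "s * (c * (b11 - b22) - 2 * s * b12) = 0"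
    using assms(1,4) by algebra
  then have E: "c * (b11 - b22) = 2 * s * b12"
    using \<open>s \<noteq> 0\<close> by simp
  have "(s\<^sup>2 + c\<^sup>2) * (b22 - b11) = s * (s * (b22 - b11)) - c * (c * (b11 - b22))"
    by algebra
  also have "\<dots> = 0"
    using D E by algebra
  finally have "b22 = b11"
    using assms(1) by simp
  then show ?thesis
    using E \<open>s \<noteq> 0\<close> by simp
qed

lemma hess_at_comp_inner_divide:
  fixes V :: "real^'r \<Rightarrow> real" and \<rho> :: "'r \<Rightarrow> real^2"
  assumes "\<And>y. V differentiable (at y)" "\<And>p y. pderiv_at V p differentiable (at y)"
  shows "hess_at (\<lambda>F. V (\<chi> i. F \<bullet> \<rho> i) / d) 0 k l =
    second_moment (hess_at V 0) \<rho> (\<lambda>r. r$k) (\<lambda>r. r$l) / d"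
proof -
  define P :: "real^2^'r" where "P = (\<chi> i. \<rho> i)"
  have P: "(\<chi> i. F \<bullet> \<rho> i) = P *v F" for F
    by (simp add: vec_eq_iff matrix_vector_mul_component P_def inner_commute)
  have P_axis: "(P *v axis k 1)$p = \<rho> p $ k" for k p
    by (simp add: matrix_vector_mul_component P_def inner_axis)
  have "pderiv_at (\<lambda>y. V (P *v y)) k = (\<lambda>y. \<Sum>p\<in>UNIV. (P *v axis k 1)$p * pderiv_at V p (P *v y))" for k
    using assms(1) by (simp add: fun_eq_iff pderiv_at_comp_matrix)
  then have diff: "(\<lambda>y. V (P *v y)) differentiable (at y)" "pderiv_at (\<lambda>y. V (P *v y)) k differentiable (at y)"
    for y k
    using assms by (simp_all add: differentiable_comp_matrix differentiable_sum differentiable_mult)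
  have "pderiv_at (\<lambda>F. V (P *v F) / d) k = (\<lambda>y. pderiv_at (\<lambda>F. V (P *v F)) k y / d)"
    using diff(1) by (simp add: fun_eq_iff pderiv_at_divide_const)
  then have "hess_at (\<lambda>F. V (P *v F) / d) 0 k l = hess_at (\<lambda>F. V (P *v F)) 0 k l / d"
    using diff(2) by (simp add: hess_at_def pderiv_at_divide_const)
  then show ?thesis
    using assms by (simp add: P hess_at_comp_matrix P_axis second_moment_def mult_ac)
qed

lemma second_moment_isotropic_of_rotation_invariant:
  fixes h :: "'r::finite \<Rightarrow> 'r \<Rightarrow> real"
  assumes sym: "\<And>p q. h p q = h q p"
    and invariant: "\<And>f g. second_moment h (\<lambda>p. rot2 t *v \<rho> p) f g = second_moment h \<rho> f g"
    and "sin t \<noteq> 0"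
  shows "second_moment h \<rho> (\<lambda>r. r$k) (\<lambda>r. r$l) =
    (if k = l then second_moment h \<rho> (\<lambda>r. r$1) (\<lambda>r. r$1) else 0)"
proof -
  define B where "B k l = second_moment h \<rho> (\<lambda>r. r$k) (\<lambda>r. r$l)" for k l :: 2
  have rotated: "B k l = second_moment h \<rho> (\<lambda>r. (rot2 t *v r)$k) (\<lambda>r. (rot2 t *v r)$l)" for k l
    using invariant[of "\<lambda>r. r$k" "\<lambda>r. r$l"] by (simp add: B_def second_moment_def)
  have rot1: "(\<lambda>r. (rot2 t *v r)$1) = (\<lambda>r. cos t * r$1 + (- sin t) * r$2)"
    and rot2: "(\<lambda>r. (rot2 t *v r)$2) = (\<lambda>r. sin t * r$1 + cos t * r$2)"
    by (simp_all add: rot2_components)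
  have B21: "B 2 1 = B 1 2"
    unfolding B_def by (rule second_moment_swap[OF sym])
  have "B 1 1 = cos t * cos t * B 1 1 + cos t * (- sin t) * B 1 2
      + (- sin t) * cos t * B 2 1 + (- sin t) * (- sin t) * B 2 2"
    using rotated[of 1 1] unfolding rot1 second_moment_linear by (simp only: B_def)
  moreover have "B 1 2 = cos t * sin t * B 1 1 + cos t * cos t * B 1 2
      + (- sin t) * sin t * B 2 1 + (- sin t) * cos t * B 2 2"
    using rotated[of 1 2] unfolding rot1 rot2 second_moment_linear by (simp only: B_def)
  ultimately have "B 2 2 = B 1 1 \<and> B 1 2 = 0"
    using B21 \<open>sin t \<noteq> 0\<close> by (intro rotation_invariant_form_isotropic[of "sin t" "cos t"]) (simp, simp, algebra+)
  then show ?thesis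
    using B21 exhaust_2[of k] exhaust_2[of l] by (auto simp: B_def)
qed

lemma hess_second_moment_isotropic:
  fixes V :: "real^'r::finite \<Rightarrow> real" and \<rho> :: "'r \<Rightarrow> real^2"
  assumes "Ck (Suc (Suc m)) V" "inj \<rho>" "(\<lambda>r. rot2 t *v r) ` range \<rho> = range \<rho>" "sin t \<noteq> 0"
    and V_sym: "\<forall>a. V a = V (\<chi> i. a $ (inv \<rho> (rot2 t *v \<rho> i)))"
  shows "second_moment (hess_at V 0) \<rho> (\<lambda>r. r$k) (\<lambda>r. r$l) =
    (if k = l then second_moment (hess_at V 0) \<rho> (\<lambda>r. r$1) (\<lambda>r. r$1) else 0)"
proof -
  define \<pi> where "\<pi> = (\<lambda>i. inv \<rho> (rot2 t *v \<rho> i))"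
  have \<pi>: "\<rho> (\<pi> i) = rot2 t *v \<rho> i" "inj \<pi>" for i
    using rotation_permutation[OF assms(2,3)] by (simp_all add: \<pi>_def)
  have "hess_at V 0 (\<pi> i) (\<pi> j) = hess_at V 0 i j" for i j
    using V_sym \<pi>(2) Ck_Suc_Suc_differentiable[OF assms(1)] unfolding \<pi>_def
    by (intro hess_at_permute_vars) auto
  then show ?thesis
    using second_moment_permute[OF \<pi>(2), of "hess_at V 0" \<rho>] \<pi>(1) \<open>sin t \<noteq> 0\<close>
      Ck_Suc_Suc_hess_at_symmetric[OF assms(1)]
    by (intro second_moment_isotropic_of_rotation_invariant) auto
qed

lemma isotropic_second_moment_pos:
  assumes isotropic: "\<And>k l. second_moment h \<rho> (\<lambda>r. r$k) (\<lambda>r. r$l) = (if k = l then b else 0)"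
    and f_linear: "\<And>r. f r = \<alpha> * r$1 + \<beta> * r$2"
    and "0 < second_moment h \<rho> f f"
  shows "0 < b"
proof -
  have "f = (\<lambda>r. \<alpha> * r$1 + \<beta> * r$2)"
    using f_linear by auto
  then have "second_moment h \<rho> f f = (\<alpha>\<^sup>2 + \<beta>\<^sup>2) * b"
    by (simp add: second_moment_linear isotropic algebra_simps power2_eq_square)
  then show ?thesis
    using \<open>0 < second_moment h \<rho> f f\<close> by (metis not_sum_power2_lt_zero zero_less_mult_iff)
qed

lemma sin_2pi_div_3: "sin (2 * pi / 3) = sqrt 3 / 2"
proof -
  have angle: "2 * pi / 3 = pi - pi / 3"
    by simp
  show ?thesis
    unfolding angle sin_pi_minus sin_60 by simp
qed

section \<open>Lattice coordinates\<close>

lemma has_sum_range_finite_support: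
  fixes F :: "'b \<Rightarrow> real"
  assumes "inj \<iota>" "finite B" "\<And>z. z \<notin> B \<Longrightarrow> F (\<iota> z) = 0"
  shows "(F has_sum (\<Sum>z\<in>B. F (\<iota> z))) (range \<iota>)"
proof -
  have "((F \<circ> \<iota>) has_sum (\<Sum>z\<in>B. F (\<iota> z))) UNIV"
    using assms(2,3) by (intro has_sum_finite_neutralI) auto
  then show ?thesis
    using has_sum_reindex[of \<iota> UNIV F] \<open>inj \<iota>\<close> by simp
qed

definition lattice_point :: "real^2^2 \<Rightarrow> int \<times> int \<Rightarrow> real^2" where
  "lattice_point A z = A *v vector [of_int (fst z), of_int (snd z)]"

text \<open>Coordinates with respect to the columns of A, by Cramer's rule.\<close>

definition lattice_coord1 :: "real^2^2 \<Rightarrow> real^2 \<Rightarrow> real" where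
  "lattice_coord1 A x = (A$2$2 * x$1 - A$1$2 * x$2) / det A"

definition lattice_coord2 :: "real^2^2 \<Rightarrow> real^2 \<Rightarrow> real" where
  "lattice_coord2 A x = (A$1$1 * x$2 - A$2$1 * x$1) / det A"

lemma lattice_point_components:
  "lattice_point A (m, n) $ 1 = A$1$1 * of_int m + A$1$2 * of_int n"
  "lattice_point A (m, n) $ 2 = A$2$1 * of_int m + A$2$2 * of_int n"
  by (simp_all add: lattice_point_def matrix_vector_mult_def sum_2)

lemma lattice_coords_lattice_point:
  assumes "det A \<noteq> 0"
  shows "lattice_coord1 A (lattice_point A (m, n)) = of_int m"
    "lattice_coord2 A (lattice_point A (m, n)) = of_int n"
proof -
  have "A$2$2 * (A$1$1 * of_int m + A$1$2 * of_int n) - A$1$2 * (A$2$1 * of_int m + A$2$2 * of_int n)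
      = det A * of_int m"
    "A$1$1 * (A$2$1 * of_int m + A$2$2 * of_int n) - A$2$1 * (A$1$1 * of_int m + A$1$2 * of_int n)
      = det A * of_int n"
    by (simp_all add: det_2 algebra_simps)
  then show "lattice_coord1 A (lattice_point A (m, n)) = of_int m"
    "lattice_coord2 A (lattice_point A (m, n)) = of_int n"
    using assms by (simp_all add: lattice_coord1_def lattice_coord2_def lattice_point_components)
qed

lemma lattice_point_add:
  "lattice_point A (m, n) + lattice_point A (m', n') = lattice_point A (m + m', n + n')"
  by (simp add: vec_eq_iff forall_2 lattice_point_components algebra_simps)

lemma inj_lattice_point:
  assumes "det A \<noteq> 0"
  shows "inj (lattice_point A)"
proof (rule injI)
  fix z w :: "int \<times> int"
  assume eq: "lattice_point A z = lattice_point A w"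
  obtain m n m' n' where "z = (m, n)" "w = (m', n')"
    by fastforce
  then show "z = w"
    using arg_cong[OF eq, of "lattice_coord1 A"] arg_cong[OF eq, of "lattice_coord2 A"] assms
    by (simp add: lattice_coords_lattice_point)
qed

lemma lattice_eq_range_lattice_point: "lattice A = range (lattice_point A)"
proof -
  have "(\<chi> i. real_of_int (z $ i)) = vector [of_int (z$1), of_int (z$2)]" for z :: "int^2"
    by (simp add: vec_eq_iff forall_2)
  then have point: "A *v (\<chi> i. real_of_int (z $ i)) = lattice_point A (z$1, z$2)" for z :: "int^2"
    by (simp add: lattice_point_def)
  moreover have "lattice_point A (m, n) = A *v (\<chi> i. real_of_int ((vector [m, n] :: int^2) $ i))" for m n
    using point[of "vector [m, n]"] by simp
  ultimately show ?thesis
    unfolding lattice_def by (auto simp: image_iff) metis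
qed

lemma lattice_coord1_sum_scaled:
  "lattice_coord1 A (\<Sum>r\<in>S. c r *\<^sub>R r) = (\<Sum>r\<in>S. c r * lattice_coord1 A r)"
  unfolding lattice_coord1_def
  by (simp add: sum_distrib_left sum_subtractf algebra_simps flip: sum_divide_distrib)

lemma exists_lattice_coord1_nonzero:
  assumes "det A \<noteq> 0" "int_span (range \<rho>) = lattice A"
  obtains p where "lattice_coord1 A (\<rho> p) \<noteq> 0"
proof -
  have "lattice_point A (1, 0) \<in> int_span (range \<rho>)"
    using assms(2) lattice_eq_range_lattice_point by auto
  then obtain c where c: "lattice_point A (1, 0) = (\<Sum>r\<in>range \<rho>. of_int (c r) *\<^sub>R r)"
    unfolding int_span_def by blast
  have "(\<Sum>r\<in>range \<rho>. of_int (c r) * lattice_coord1 A r) = 1"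
    using c lattice_coords_lattice_point(1)[OF assms(1), of 1 0]
    by (simp add: lattice_coord1_sum_scaled)
  then obtain r where "r \<in> range \<rho>" "lattice_coord1 A r \<noteq> 0"
    by (metis (mono_tags, lifting) mult_zero_right sum.neutral zero_neq_one)
  then show ?thesis
    using that by blast
qed

lemma lattice_coord1_linear: "lattice_coord1 A r = A$2$2 / det A * r$1 + (- A$1$2 / det A) * r$2"
  by (simp add: lattice_coord1_def diff_divide_distrib)

section \<open>Pyramid test functions\<close>

definition pyramid :: "real \<Rightarrow> real \<Rightarrow> real \<Rightarrow> real \<Rightarrow> real" where
  "pyramid N L x y = max 0 (min (N - \<bar>x\<bar>) (L - \<bar>y\<bar>))"

lemma pyramid_lipschitz: "\<bar>pyramid N L (x + a) (y + b) - pyramid N L x y\<bar> \<le> \<bar>a\<bar> + \<bar>b\<bar>"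
  unfolding pyramid_def by (simp add: max_def min_def abs_if)

lemma pyramid_eq_slope:
  assumes "\<bar>x\<bar> \<le> N" "\<bar>y\<bar> \<le> L - N"
  shows "pyramid N L x y = N - \<bar>x\<bar>"
proof -
  have "N - \<bar>x\<bar> \<le> L - \<bar>y\<bar>"
    using assms by linarith
  then show ?thesis
    using assms by (simp add: pyramid_def min_absorb1 max_absorb2)
qed

lemma pyramid_eq_0: "N \<le> \<bar>x\<bar> \<or> L \<le> \<bar>y\<bar> \<Longrightarrow> pyramid N L x y = 0"
  unfolding pyramid_def by (auto simp: max_def min_def)

definition pyramid_diff ::
    "int \<Rightarrow> int \<Rightarrow> ('r \<Rightarrow> int) \<Rightarrow> ('r \<Rightarrow> int) \<Rightarrow> int \<times> int \<Rightarrow> 'r \<Rightarrow> real" where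
  "pyramid_diff N L a b z i =
     pyramid N L (of_int (fst z + a i)) (of_int (snd z + b i)) - pyramid N L (of_int (fst z)) (of_int (snd z))"

definition pyramid_box :: "int \<Rightarrow> int \<Rightarrow> int \<Rightarrow> (int \<times> int) set" where
  "pyramid_box N L K = {-(N + K)..N + K} \<times> {-(L + K)..L + K}"

definition pyramid_slopes :: "int \<Rightarrow> int \<Rightarrow> int \<Rightarrow> (int \<times> int) set" where
  "pyramid_slopes N L K = ({K..N - K} \<union> {-(N - K)..-K}) \<times> {-(L - N - K)..L - N - K}"

context
  fixes a b :: "'r \<Rightarrow> int" and K :: int
  assumes K_pos: "1 \<le> K" and steps_bounded: "\<And>i. \<bar>a i\<bar> + \<bar>b i\<bar> \<le> K"
begin

lemma pyramid_diff_eq_0: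
  assumes "z \<notin> pyramid_box N L K"
  shows "pyramid_diff N L a b z i = 0"
proof -
  obtain m n where z: "z = (m, n)"
    by fastforce
  have "\<bar>a i\<bar> \<le> K" "\<bar>b i\<bar> \<le> K"
    using steps_bounded[of i] by auto
  then have "(N \<le> \<bar>m + a i\<bar> \<and> N \<le> \<bar>m\<bar>) \<or> (L \<le> \<bar>n + b i\<bar> \<and> L \<le> \<bar>n\<bar>)"
    using assms unfolding z pyramid_box_def by auto
  then show ?thesis
    unfolding z pyramid_diff_def
    by (metis (no_types, lifting) diff_self fst_conv snd_conv of_int_abs of_int_le_iff pyramid_eq_0)
qed

lemma pyramid_diff_bounded: "\<bar>pyramid_diff N L a b z i\<bar> \<le> of_int K"
proof -
  have "\<bar>pyramid_diff N L a b z i\<bar> \<le> \<bar>of_int (a i)\<bar> + \<bar>of_int (b i)\<bar>"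
    unfolding pyramid_diff_def of_int_add by (rule pyramid_lipschitz)
  also have "\<dots> \<le> of_int K"
    using steps_bounded[of i] by (metis of_int_abs of_int_add of_int_le_iff)
  finally show ?thesis .
qed

lemma pyramid_diff_on_slopes:
  assumes "z \<in> pyramid_slopes N L K"
  shows "pyramid_diff N L a b z = (\<lambda>i. - of_int (a i)) \<or> pyramid_diff N L a b z = (\<lambda>i. of_int (a i))"
proof -
  obtain m n where z: "z = (m, n)" and m: "K \<le> \<bar>m\<bar>" "\<bar>m\<bar> \<le> N - K" and n: "\<bar>n\<bar> \<le> L - N - K"
    and sign: "K \<le> m \<or> m \<le> - K"
    using assms K_pos unfolding pyramid_slopes_def by (auto simp: abs_if)
  have "pyramid_diff N L a b z i = of_int (\<bar>m\<bar> - \<bar>m + a i\<bar>)" for i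
  proof -
    have "\<bar>a i\<bar> \<le> K" "\<bar>b i\<bar> \<le> K"
      using steps_bounded[of i] by auto
    then have "\<bar>m + a i\<bar> \<le> N" "\<bar>n + b i\<bar> \<le> L - N" "\<bar>m\<bar> \<le> N" "\<bar>n\<bar> \<le> L - N"
      using m n by auto
    then show ?thesis
      unfolding z pyramid_diff_def
      by (simp add: pyramid_eq_slope flip: of_int_abs of_int_diff of_int_le_iff)
  qed
  moreover have "\<bar>m\<bar> - \<bar>m + a i\<bar> = (if K \<le> m then - a i else a i)" for i
    using sign m K_pos steps_bounded[of i] by (smt (verit) abs_le_iff)
  ultimately show ?thesis
    using sign by (auto simp: fun_eq_iff)
qed

end

lemma real_card_pyramid_box:
  assumes "0 \<le> N + K" "0 \<le> L + K"
  shows "real (card (pyramid_box N L K)) = (2 * (N + K) + 1) * (2 * (L + K) + 1)"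
proof -
  have "int (card (pyramid_box N L K)) = (2 * (N + K) + 1) * (2 * (L + K) + 1)"
    using assms by (simp add: pyramid_box_def card_cartesian_product algebra_simps)
  then show ?thesis
    by (metis of_int_of_nat_eq of_int_mult)
qed

lemma real_card_pyramid_slopes:
  assumes "1 \<le> K" "2 * K \<le> N + 1" "N + K \<le> L"
  shows "real (card (pyramid_slopes N L K)) = 2 * (N - 2 * K + 1) * (2 * (L - N - K) + 1)"
proof -
  have "card ({K..N - K} \<union> {-(N - K)..-K}) = nat (N - 2 * K + 1) + nat (N - 2 * K + 1)"
    using assms by (subst card_Un_disjoint) (auto simp: algebra_simps)
  then have "int (card (pyramid_slopes N L K)) = 2 * (N - 2 * K + 1) * (2 * (L - N - K) + 1)"
    using assms by (simp add: pyramid_slopes_def card_cartesian_product algebra_simps)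
  then show ?thesis
    by (metis of_int_of_nat_eq of_int_mult)
qed

lemma pyramid_slopes_subset_box:
  assumes "1 \<le> K" "N + K \<le> L"
  shows "pyramid_slopes N L K \<subseteq> pyramid_box N L K"
  using assms unfolding pyramid_slopes_def pyramid_box_def by auto

lemma pyramid_count_asymptotics:
  fixes K e C :: real
  assumes "e > 0"
  obtains x0 where "\<And>x. x0 \<le> x \<Longrightarrow>
    C * ((2 * (x + K) + 1) * (2 * (x\<^sup>2 + K) + 1)) < (e + C) * (2 * (x - 2 * K + 1) * (2 * (x\<^sup>2 - x - K) + 1))"
proof -
  have ratio: "((\<lambda>x::real. ((2 * (x + K) + 1) * (2 * (x\<^sup>2 + K) + 1)) /
      (2 * (x - 2 * K + 1) * (2 * (x\<^sup>2 - x - K) + 1))) \<longlongrightarrow> 1) at_top"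
    by real_asymp
  have "((\<lambda>x::real. C * (((2 * (x + K) + 1) * (2 * (x\<^sup>2 + K) + 1)) /
      (2 * (x - 2 * K + 1) * (2 * (x\<^sup>2 - x - K) + 1)))) \<longlongrightarrow> C * 1) at_top"
    by (intro tendsto_mult tendsto_const ratio)
  then have "eventually (\<lambda>x::real. C * (((2 * (x + K) + 1) * (2 * (x\<^sup>2 + K) + 1)) /
      (2 * (x - 2 * K + 1) * (2 * (x\<^sup>2 - x - K) + 1))) < e + C) at_top"
    using \<open>e > 0\<close> by (intro order_tendstoD) auto
  moreover have "eventually (\<lambda>x::real. 0 < 2 * (x - 2 * K + 1) * (2 * (x\<^sup>2 - x - K) + 1)) at_top"
    by real_asymp
  ultimately have "eventually (\<lambda>x::real. C * ((2 * (x + K) + 1) * (2 * (x\<^sup>2 + K) + 1))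
      < (e + C) * (2 * (x - 2 * K + 1) * (2 * (x\<^sup>2 - x - K) + 1))) at_top"
    by eventually_elim (simp add: field_simps)
  then show ?thesis
    using that unfolding eventually_at_top_linorder by blast
qed

lemma pyramid_test_sum_le:
  fixes \<Phi> :: "('r \<Rightarrow> real) \<Rightarrow> real" and a b :: "'r \<Rightarrow> int" and K :: int
  assumes K: "1 \<le> K" "\<And>i. \<bar>a i\<bar> + \<bar>b i\<bar> \<le> K" and "N + K \<le> L"
    and even: "\<And>v. \<Phi> (\<lambda>i. - v i) = \<Phi> v"
    and bounded: "\<And>v. (\<And>i. \<bar>v i\<bar> \<le> of_int K) \<Longrightarrow> \<Phi> v \<le> C"
  shows "(\<Sum>z\<in>pyramid_box N L K. \<Phi> (pyramid_diff N L a b z)) \<le>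
    (real (card (pyramid_box N L K)) - real (card (pyramid_slopes N L K))) * C
    + real (card (pyramid_slopes N L K)) * \<Phi> (\<lambda>i. of_int (a i))"
proof -
  define Box where "Box = pyramid_box N L K"
  define S where "S = pyramid_slopes N L K"
  have "finite Box" "S \<subseteq> Box"
    using K \<open>N + K \<le> L\<close> pyramid_slopes_subset_box[of K N L] by (simp_all add: Box_def S_def pyramid_box_def)
  have "(\<Sum>z\<in>Box. \<Phi> (pyramid_diff N L a b z)) =
      (\<Sum>z\<in>Box - S. \<Phi> (pyramid_diff N L a b z)) + (\<Sum>z\<in>S. \<Phi> (pyramid_diff N L a b z))"
    by (rule sum.subset_diff[OF \<open>S \<subseteq> Box\<close> \<open>finite Box\<close>])
  also have "(\<Sum>z\<in>S. \<Phi> (pyramid_diff N L a b z)) = real (card S) * \<Phi> (\<lambda>i. of_int (a i))"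
  proof -
    have "\<Phi> (pyramid_diff N L a b z) = \<Phi> (\<lambda>i. of_int (a i))" if "z \<in> S" for z
      using pyramid_diff_on_slopes[where a = a and b = b, OF K that[unfolded S_def]] even by auto
    then show ?thesis
      by simp
  qed
  also have "(\<Sum>z\<in>Box - S. \<Phi> (pyramid_diff N L a b z)) \<le> real (card (Box - S)) * C"
    using pyramid_diff_bounded[where a = a and b = b, OF K] by (intro sum_bounded_above bounded) auto
  also have "real (card (Box - S)) = real (card Box) - real (card S)"
    using \<open>finite Box\<close> \<open>S \<subseteq> Box\<close> by (simp add: card_Diff_subset finite_subset card_mono of_nat_diff)
  finally show ?thesis
    by (simp add: Box_def S_def)
qed

text \<open>For L = N^2 the slopes fill all but O(N^2) of the O(N^3) points of the box, and there
  the differences are \<open>\<plusminus>a\<close>; elsewhere they stay bounded. Hence the test sums are the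
  number of slope points times \<open>\<Phi> a\<close> plus O(N^2), which forces \<open>\<Phi> a \<ge> 0\<close>.\<close>

lemma nonneg_of_pyramid_tests:
  fixes \<Phi> :: "('r \<Rightarrow> real) \<Rightarrow> real" and a b :: "'r \<Rightarrow> int" and K :: int
  assumes K: "1 \<le> K" "\<And>i. \<bar>a i\<bar> + \<bar>b i\<bar> \<le> K"
    and even: "\<And>v. \<Phi> (\<lambda>i. - v i) = \<Phi> v"
    and bounded: "\<And>v. (\<And>i. \<bar>v i\<bar> \<le> of_int K) \<Longrightarrow> \<Phi> v \<le> C"
    and tests: "\<And>N L. 0 \<le> (\<Sum>z\<in>pyramid_box N L K. \<Phi> (pyramid_diff N L a b z))"
  shows "0 \<le> \<Phi> (\<lambda>i. of_int (a i))"
proof (rule ccontr)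
  define e where "e = - \<Phi> (\<lambda>i. of_int (a i))"
  assume "\<not> 0 \<le> \<Phi> (\<lambda>i. of_int (a i))"
  then have "e > 0"
    by (simp add: e_def)
  then obtain x0 where x0: "\<And>x::real. x0 \<le> x \<Longrightarrow>
      C * ((2 * (x + of_int K) + 1) * (2 * (x\<^sup>2 + of_int K) + 1))
      < (e + C) * (2 * (x - 2 * of_int K + 1) * (2 * (x\<^sup>2 - x - of_int K) + 1))"
    using pyramid_count_asymptotics[where C = C and K = "of_int K"] by blast
  define N where "N = max \<lceil>x0\<rceil> (2 * K + 2)"
  have N: "2 * K + 2 \<le> N" "x0 \<le> of_int N"
    unfolding N_def by (simp, metis le_of_int_ceiling max.cobounded1 of_int_le_iff order_trans)
  have "2 * N \<le> N * N"
    using N K by (intro mult_right_mono) auto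
  then have L: "N + K \<le> N\<^sup>2"
    using N K unfolding power2_eq_square by linarith
  have "0 \<le> (\<Sum>z\<in>pyramid_box N (N\<^sup>2) K. \<Phi> (pyramid_diff N (N\<^sup>2) a b z))"
    by (rule tests)
  also have "\<dots> \<le> ((2 * (N + K) + 1) * (2 * (N\<^sup>2 + K) + 1) - 2 * (N - 2 * K + 1) * (2 * (N\<^sup>2 - N - K) + 1)) * C
      - 2 * (N - 2 * K + 1) * (2 * (N\<^sup>2 - N - K) + 1) * e"
    using pyramid_test_sum_le[where a = a and b = b and \<Phi> = \<Phi> and C = C, OF K L even bounded] K N L
    by (simp add: real_card_pyramid_box real_card_pyramid_slopes e_def)
  finally show False
    using x0[OF N(2)] by (simp add: algebra_simps)
qed

section \<open>Positivity from lattice stability\<close>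

lemma quadratic_form_le_of_bounded:
  fixes H :: "'r::finite \<Rightarrow> 'r \<Rightarrow> real"
  assumes "\<And>i. \<bar>v i\<bar> \<le> k"
  shows "(\<Sum>i\<in>UNIV. \<Sum>j\<in>UNIV. H i j * v i * v j) \<le> (\<Sum>i\<in>UNIV. \<Sum>j\<in>UNIV. \<bar>H i j\<bar>) * k\<^sup>2"
proof -
  have "H i j * v i * v j \<le> \<bar>H i j\<bar> * k\<^sup>2" for i j
  proof -
    have "\<bar>v i * v j\<bar> \<le> k * k"
      unfolding abs_mult using assms[of i] assms[of j] by (intro mult_mono) auto
    then have "\<bar>H i j\<bar> * \<bar>v i * v j\<bar> \<le> \<bar>H i j\<bar> * k\<^sup>2"
      by (simp add: mult_left_mono power2_eq_square)
    then show ?thesis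
      by (metis abs_ge_self abs_mult mult.assoc order_trans)
  qed
  then show ?thesis
    by (simp add: sum_distrib_right sum_mono)
qed

lemma lattice_stable_pyramid_test:
  fixes A :: "real^2^2" and \<rho> :: "'r::finite \<Rightarrow> real^2" and H :: "'r \<Rightarrow> 'r \<Rightarrow> real"
  assumes "det A \<noteq> 0" and ab: "\<And>p. \<rho> p = lattice_point A (a p, b p)"
    and K: "1 \<le> K" "\<And>i. \<bar>a i\<bar> + \<bar>b i\<bar> \<le> K"
    and stable: "\<forall>u::real^2 \<Rightarrow> real.
        (\<lambda>x. \<Sum>i\<in>UNIV. (fdiff (\<rho> i) u x)\<^sup>2) summable_on lattice A \<longrightarrow>
        (\<Sum>\<^sub>\<infinity>x\<in>lattice A. \<Sum>i\<in>UNIV. \<Sum>j\<in>UNIV. H i j * fdiff (\<rho> i) u x * fdiff (\<rho> j) u x)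
        \<ge> c\<^sub>0 * (\<Sum>\<^sub>\<infinity>x\<in>lattice A. \<Sum>i\<in>UNIV. (fdiff (\<rho> i) u x)\<^sup>2)"
  shows "c\<^sub>0 * (\<Sum>z\<in>pyramid_box N L K. \<Sum>i\<in>UNIV. (pyramid_diff N L a b z i)\<^sup>2) \<le>
    (\<Sum>z\<in>pyramid_box N L K. \<Sum>i\<in>UNIV. \<Sum>j\<in>UNIV.
      H i j * pyramid_diff N L a b z i * pyramid_diff N L a b z j)"
proof -
  define u where "u x = pyramid N L (lattice_coord1 A x) (lattice_coord2 A x)" for x
  have D: "fdiff (\<rho> i) u (lattice_point A z) = pyramid_diff N L a b z i" for z i
    using \<open>det A \<noteq> 0\<close> unfolding u_def fdiff_def pyramid_diff_def ab
    by (cases z) (simp add: lattice_point_add lattice_coords_lattice_point)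
  define F1 where "F1 x = (\<Sum>i\<in>UNIV. (fdiff (\<rho> i) u x)\<^sup>2)" for x
  define F2 where "F2 x = (\<Sum>i\<in>UNIV. \<Sum>j\<in>UNIV. H i j * fdiff (\<rho> i) u x * fdiff (\<rho> j) u x)" for x
  have vanish: "F1 (lattice_point A z) = 0" "F2 (lattice_point A z) = 0"
    if "z \<notin> pyramid_box N L K" for z
    using pyramid_diff_eq_0[where a = a and b = b, OF K that] by (simp_all add: F1_def F2_def D)
  have "finite (pyramid_box N L K)"
    by (simp add: pyramid_box_def)
  note has_sum = has_sum_range_finite_support[OF inj_lattice_point[OF \<open>det A \<noteq> 0\<close>] this]
  have F1: "(F1 has_sum (\<Sum>z\<in>pyramid_box N L K. F1 (lattice_point A z))) (lattice A)"
    and F2: "(F2 has_sum (\<Sum>z\<in>pyramid_box N L K. F2 (lattice_point A z))) (lattice A)"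
    unfolding lattice_eq_range_lattice_point using vanish by (blast intro: has_sum)+
  have "c\<^sub>0 * infsum F1 (lattice A) \<le> infsum F2 (lattice A)"
    using stable has_sum_imp_summable[OF F1] unfolding F1_def F2_def by blast
  then show ?thesis
    by (simp add: infsumI[OF F1] infsumI[OF F2] F1_def F2_def D)
qed

lemma lattice_stability_coord1:
  fixes A :: "real^2^2" and \<rho> :: "'r::finite \<Rightarrow> real^2" and H :: "'r \<Rightarrow> 'r \<Rightarrow> real"
  assumes "det A \<noteq> 0" "range \<rho> \<subseteq> lattice A" "0 \<le> c\<^sub>0"
    and stable: "\<forall>u::real^2 \<Rightarrow> real.
        (\<lambda>x. \<Sum>i\<in>UNIV. (fdiff (\<rho> i) u x)\<^sup>2) summable_on lattice A \<longrightarrow>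
        (\<Sum>\<^sub>\<infinity>x\<in>lattice A. \<Sum>i\<in>UNIV. \<Sum>j\<in>UNIV. H i j * fdiff (\<rho> i) u x * fdiff (\<rho> j) u x)
        \<ge> c\<^sub>0 * (\<Sum>\<^sub>\<infinity>x\<in>lattice A. \<Sum>i\<in>UNIV. (fdiff (\<rho> i) u x)\<^sup>2)"
  shows "c\<^sub>0 * (\<Sum>p\<in>UNIV. (lattice_coord1 A (\<rho> p))\<^sup>2) \<le>
    second_moment H \<rho> (lattice_coord1 A) (lattice_coord1 A)"
proof -
  have "\<forall>p. \<exists>z. \<rho> p = lattice_point A z"
    using assms(2) lattice_eq_range_lattice_point by blast
  then obtain z where "\<And>p. \<rho> p = lattice_point A (z p)"
    by metis
  then obtain a b where ab: "\<And>p. \<rho> p = lattice_point A (a p, b p)"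
    using that[of "\<lambda>p. fst (z p)" "\<lambda>p. snd (z p)"] by simp
  define K where "K = 1 + (\<Sum>p\<in>UNIV. \<bar>a p\<bar> + \<bar>b p\<bar>)"
  have "\<bar>a i\<bar> + \<bar>b i\<bar> \<le> (\<Sum>p\<in>UNIV. \<bar>a p\<bar> + \<bar>b p\<bar>)" for i
    by (rule member_le_sum) auto
  then have K: "1 \<le> K" "\<And>i. \<bar>a i\<bar> + \<bar>b i\<bar> \<le> K"
    unfolding K_def by (simp_all add: sum_nonneg add_increasing)
  define \<Phi> where "\<Phi> v = (\<Sum>i\<in>UNIV. \<Sum>j\<in>UNIV. H i j * v i * v j) - c\<^sub>0 * (\<Sum>i\<in>UNIV. (v i)\<^sup>2)"
    for v :: "'r \<Rightarrow> real"
  have "0 \<le> \<Phi> (\<lambda>i. of_int (a i))"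
  proof (rule nonneg_of_pyramid_tests[where a = a and b = b, OF K])
    show "\<Phi> (\<lambda>i. - v i) = \<Phi> v" for v
      by (simp add: \<Phi>_def)
    show "\<Phi> v \<le> (\<Sum>i\<in>UNIV. \<Sum>j\<in>UNIV. \<bar>H i j\<bar>) * (of_int K)\<^sup>2"
      if "\<And>i. \<bar>v i\<bar> \<le> of_int K" for v
    proof -
      have "0 \<le> c\<^sub>0 * (\<Sum>i\<in>UNIV. (v i)\<^sup>2)"
        using \<open>0 \<le> c\<^sub>0\<close> by (simp add: sum_nonneg)
      then show ?thesis
        using quadratic_form_le_of_bounded[of v, OF that, of H] by (simp add: \<Phi>_def)
    qed
    show "0 \<le> (\<Sum>z\<in>pyramid_box N L K. \<Phi> (pyramid_diff N L a b z))" for N L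
      using lattice_stable_pyramid_test[OF \<open>det A \<noteq> 0\<close> ab K stable, of N L]
      by (simp add: \<Phi>_def sum_subtractf sum_distrib_left)
  qed
  moreover have "lattice_coord1 A (\<rho> p) = of_int (a p)" for p
    using \<open>det A \<noteq> 0\<close> by (simp add: ab lattice_coords_lattice_point)
  ultimately show ?thesis
    by (simp add: \<Phi>_def second_moment_def)
qed

lemma lattice_stable_isotropic_moment_pos:
  fixes A :: "real^2^2" and \<rho> :: "'r::finite \<Rightarrow> real^2" and H :: "'r \<Rightarrow> 'r \<Rightarrow> real"
  assumes "det A \<noteq> 0" "range \<rho> \<subseteq> lattice A" "int_span (range \<rho>) = lattice A" "0 < c\<^sub>0"
    and stable: "\<forall>u::real^2 \<Rightarrow> real.
        (\<lambda>x. \<Sum>i\<in>UNIV. (fdiff (\<rho> i) u x)\<^sup>2) summable_on lattice A \<longrightarrow>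
        (\<Sum>\<^sub>\<infinity>x\<in>lattice A. \<Sum>i\<in>UNIV. \<Sum>j\<in>UNIV. H i j * fdiff (\<rho> i) u x * fdiff (\<rho> j) u x)
        \<ge> c\<^sub>0 * (\<Sum>\<^sub>\<infinity>x\<in>lattice A. \<Sum>i\<in>UNIV. (fdiff (\<rho> i) u x)\<^sup>2)"
    and isotropic: "\<And>k l. second_moment H \<rho> (\<lambda>r. r$k) (\<lambda>r. r$l) = (if k = l then b else 0)"
  shows "0 < b"
proof -
  obtain i where "lattice_coord1 A (\<rho> i) \<noteq> 0"
    using exists_lattice_coord1_nonzero assms(1,3) by blast
  then have "0 < c\<^sub>0 * (\<Sum>p\<in>UNIV. (lattice_coord1 A (\<rho> p))\<^sup>2)"
    using \<open>0 < c\<^sub>0\<close> by (intro mult_pos_pos sum_pos2[of UNIV i]) auto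
  also have "\<dots> \<le> second_moment H \<rho> (lattice_coord1 A) (lattice_coord1 A)"
    using assms(1,2,4) stable by (intro lattice_stability_coord1) auto
  finally show ?thesis
    by (rule isotropic_second_moment_pos[OF isotropic lattice_coord1_linear])
qed

theorem corollary5p4:
  fixes A Q :: "real^2^2"
    and \<rho> :: "'r::finite \<Rightarrow> real^2"
    and V :: "real^'r \<Rightarrow> real"
    and p c\<^sub>0 :: real
  assumes lat: "(A = A_square \<and> Q = rot2 (pi/2)) \<or> (A = A_tri \<and> Q = rot2 (2*pi/3))"
    and inj: "inj \<rho>"
    and R_sub: "range \<rho> \<subseteq> lattice A - {0}"
    and R_span: "int_span (range \<rho>) = lattice A"
    and R_rot: "(\<lambda>r. Q *v r) ` range \<rho> = range \<rho>"
    and V_C6: "Ck 6 V"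
    and V_sym: "\<forall>a. V a = V (\<chi> i. a $ (inv \<rho> (Q *v \<rho> i)))"
    and p_pos: "p > 0"
    and V_per: "\<forall>i. (\<forall>a. V (a + p *\<^sub>R axis i 1) = V a) \<and>
                    (\<forall>q. 0 < q \<and> q < p \<longrightarrow> \<not> (\<forall>a. V (a + q *\<^sub>R axis i 1) = V a))"
    and c0_pos: "c\<^sub>0 > 0"
    and stable: "\<forall>u::real^2 \<Rightarrow> real.
        (\<lambda>x. \<Sum>i\<in>UNIV. (fdiff (\<rho> i) u x)\<^sup>2) summable_on lattice A \<longrightarrow>
        (\<Sum>\<^sub>\<infinity>x\<in>lattice A. \<Sum>i\<in>UNIV. \<Sum>j\<in>UNIV.
             hess_at V 0 i j * fdiff (\<rho> i) u x * fdiff (\<rho> j) u x)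
        \<ge> c\<^sub>0 * (\<Sum>\<^sub>\<infinity>x\<in>lattice A. \<Sum>i\<in>UNIV. (fdiff (\<rho> i) u x)\<^sup>2)"
  defines "W \<equiv> (\<lambda>F::real^2. V (\<chi> i. F \<bullet> \<rho> i) / det A)"
  shows "\<exists>c\<^sub>l\<^sub>i\<^sub>n > 0. (\<forall>k l. hess_at W 0 k l = (if k = l then c\<^sub>l\<^sub>i\<^sub>n else 0)) \<and>
           (\<forall>u::real^2 \<Rightarrow> real. twice_differentiable u \<longrightarrow>
              (\<forall>x. - (\<Sum>k\<in>UNIV. pderiv_at (\<lambda>y. \<Sum>l\<in>UNIV. hess_at W 0 k l * pderiv_at u l y) k x)
                   = - c\<^sub>l\<^sub>i\<^sub>n * (\<Sum>k\<in>UNIV. hess_at u x k k)))"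
proof -
  have "Ck (Suc (Suc 4)) V"
    using V_C6 by (simp add: numeral_eq_Suc del: Ck.simps)
  have "0 < det A"
    using lat by (auto simp: det_2 A_square_def A_tri_def mat_def)
  obtain t where Q: "Q = rot2 t" and "sin t \<noteq> 0"
    using lat sin_2pi_div_3 by force
  define b where "b = second_moment (hess_at V 0) \<rho> (\<lambda>r. r$1) (\<lambda>r. r$1)"
  have isotropic: "second_moment (hess_at V 0) \<rho> (\<lambda>r. r$k) (\<lambda>r. r$l) = (if k = l then b else 0)" for k l
    unfolding b_def using \<open>Ck (Suc (Suc 4)) V\<close> inj R_rot \<open>sin t \<noteq> 0\<close> V_sym
    unfolding Q by (rule hess_second_moment_isotropic)
  have "range \<rho> \<subseteq> lattice A"
    using R_sub by blast
  with \<open>0 < det A\<close> have "0 < b"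
    by (intro lattice_stable_isotropic_moment_pos[OF _ _ R_span c0_pos stable isotropic]) auto
  then have "0 < b / det A"
    using \<open>0 < det A\<close> by simp
  moreover have "hess_at W 0 k l = (if k = l then b / det A else 0)" for k l
    unfolding W_def using Ck_Suc_Suc_differentiable[OF \<open>Ck (Suc (Suc 4)) V\<close>] isotropic
    by (simp add: hess_at_comp_inner_divide)
  ultimately show ?thesis
    using divergence_scalar_matrix_gradient by blast
qed

end
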